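(* Let $\mathbf k$ be a commutative ring with identity and $X$ a set, with $\Delta$ and $\mathcal N^{(n)}$ as in the context. Then for every $n\ge0$, $$\Delta(\mathcal N^{(n)})\subseteq\big(\mathcal N^{(0)}\otimes\mathcal N^{(n)}\big)\oplus\Big(\bigoplus_{p+q=n,\ p>0,\ q>0}\mathcal N^{(p)}\otimes\mathcal N^{(q)}\Big).$$
   Context: Let $M(X)$ be the free monoid on $X$ with identity $\mathbf 1$ and $S(X)=M(X)\setminus\{\mathbf 1\}$. For a set $Y$ write $\lfloor Y\rfloor=\{\lfloor y\rfloor: y\in Y\}$ for a disjoint copy of $Y$. Bracketed words: $\mathfrak M_0=M(X)$, $\mathfrak M_{n+1}=M(X\sqcup\lfloor\mathfrak M_n\rfloor)$, $\mathfrak M(X)=\bigcup_n\mathfrak M_n$ (monoid under concatenation); $\mathrm{dep}(w)$ is the least $n$ with $w\in\mathfrak M_n$; every $w\ne\mathbf 1$ has a unique standard decomposition $w=w_1\cdots w_m$ with factors alternately in $S(X)$ and $\lfloor\mathfrak M(X)\rfloor$ ($m$ = breadth). $\mathfrak X_0=M(X)$; for $n\ge1$, $\mathfrak X_n$ consists of $\mathbf 1$ and all words $w_1\cdots w_m$ ($m\ge1$) with factors alternately in $S(X)$ and $\lfloor\mathfrak X_{n-1}\rfloor$; $\mathfrak X_\infty=\bigcup_n\mathfrak X_n$. $\mathcal N(X)=\mathbf k\mathfrak X_\infty$ (free $\mathbf k$-module), $N_X(w)=\lfloor w\rfloor$ extended linearly (also written $\lfloor a\rfloor$). Product $\diamond$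 (bilinear, by induction on $\mathrm{dep}(w)+\mathrm{dep}(w')$): $\mathbf 1$ is the identity; for breadth-one $w,w'\ne\mathbf 1$: $w\diamond w'=ww'$ if one of them is in $S(X)$, and $\lfloor\bar w\rfloor\diamond\lfloor\bar w'\rfloor=\lfloor\lfloor\bar w\rfloor\diamond\bar w'\rfloor+\lfloor\bar w\diamond\lfloor\bar w'\rfloor\rfloor-\lfloor\lfloor\bar w\diamond\bar w'\rfloor\rfloor$; in general $w\diamond w'=w_1\cdots w_{m-1}(w_m\diamond w'_1)w'_2\cdots w'_{m'}$ for standard decompositions. $(\mathcal N(X),\diamond,N_X)$ is an associative unital algebra with identity $\mathbf 1$ and Nijenhuis operator $N_X$ (the free Nijenhuis algebra on $X$). A sequence $w_1,\dots,w_m$ in $\mathcal I:=X\sqcup\lfloor\mathfrak X_\infty\rfloor$ is alternating if for each $i$ at least one of $w_i,w_{i+1}$ lies in $X$. Every $w\in\mathfrak X_\infty\setminus\{\mathbf 1\}$ can be written uniquely as $w=w_1\diamond\cdots\diamond w_m$ (equal to the concatenation $w_1\cdots w_m$) with $w_1,\dots,w_m$ alternating in $\mathcal I$; $m=\mathrm{wid}(w)$ is the width, $\mathrm{wid}(\mathbf 1)=0$. $\mathcal N(X)\otimes\mathcal N(X)$ carries the product $(a\otimes b)\diamond(a'\otimes b')=(a\diamond a')\otimes(b\diamond b')$. The linear map $\Delta:\mathcal N(X)\to\mathcal N(X)\otimes\mathcal N(X)$ is defined on $\mathfrak X_\infty$ by induction on depth: $\Delta(\mathbf 1)=\mathbf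 1\otimes\mathbf 1$; $\Delta(x)=\mathbf 1\otimes x$ for $x\in X$; $\Delta(x_1\cdots x_m)=\Delta(x_1)\diamond\cdots\diamond\Delta(x_m)$ for $x_i\in X$, $m\ge2$; $\Delta(\lfloor\bar w\rfloor)=(\mathrm{id}\otimes N_X)\Delta(\bar w)$ for $\bar w\in\mathfrak X_\infty$; and if $w$ has $\diamond$-factorization $w=w_1\diamond\cdots\diamond w_m$ with $m\ge2$, $\Delta(w)=\Delta(w_1)\diamond\cdots\diamond\Delta(w_m)$. Grading: for $w\in\mathfrak X_\infty$, $\deg(w)=\deg_X(w)+\deg_N(w)$, where $\deg_X(w)$ is the number of occurrences of letters of $X$ in $w$ and $\deg_N(w)$ the number of occurrences of the bracket $\lfloor\ \rfloor$ (e.g. $\deg(\lfloor x\rfloor)=2$, $\deg(x\lfloor x\rfloor)=3$). Set $\mathcal N^{(n)}=\mathbf k\{w\in\mathfrak X_\infty:\deg(w)=n\}$; thus $\mathcal N(X)=\bigoplus_{n\ge0}\mathcal N^{(n)}$, $\mathcal N^{(0)}=\mathbf k\mathbf 1$, and $N_X(\mathcal N^{(n)})\subseteq\mathcal N^{(n+1)}$. *)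

theory Defs
  imports Main
begin

text \<open>A bracketed word is a list of atoms; an atom is either a letter of X or
a bracket applied to a bracketed word.  The empty list is the identity 1.\<close>

datatype 'x atom = Let 'x | Brk "'x atom list"

type_synonym 'x word = "'x atom list"

fun is_brk :: "'x atom \<Rightarrow> bool" where
  "is_brk (Let x) = False"
| "is_brk (Brk u) = True"

text \<open>Membership in the set of Nijenhuis words (no two adjacent brackets, recursively).\<close>
fun nwf :: "'x word \<Rightarrow> bool" and nwf_atom :: "'x atom \<Rightarrow> bool" where
  "nwf [] = True"
| "nwf (a # w) = (nwf_atom a \<and> nwf w \<and>
      (case w of [] \<Rightarrow> True | b # _ \<Rightarrow> \<not> (is_brk a \<and> is_brk b)))"
| "nwf_atom (Let x) = True"
| "nwf_atom (Brk u) = nwf u"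

fun ndeg :: "'x word \<Rightarrow> nat" and ndeg_atom :: "'x atom \<Rightarrow> nat" where
  "ndeg [] = 0"
| "ndeg (a # w) = ndeg_atom a + ndeg w"
| "ndeg_atom (Let x) = 1"
| "ndeg_atom (Brk u) = Suc (ndeg u)"

type_synonym ('k, 'b) lc = "('k \<times> 'b) list"

definition lc_coeff :: "('k::comm_ring_1, 'b) lc \<Rightarrow> 'b \<Rightarrow> 'k" where
  "lc_coeff L z = sum_list (map (\<lambda>(c, z'). if z' = z then c else 0) L)"

definition lc_neg :: "('k::comm_ring_1, 'b) lc \<Rightarrow> ('k, 'b) lc" where
  "lc_neg L = map (\<lambda>(c, w). (- c, w)) L"

definition lc_brk :: "('k, 'x word) lc \<Rightarrow> ('k, 'x word) lc" where
  "lc_brk L = map (\<lambda>(c, w). (c, [Brk w])) L"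

definition lc_pre :: "'x word \<Rightarrow> ('k, 'x word) lc \<Rightarrow> ('k, 'x word) lc" where
  "lc_pre p L = map (\<lambda>(c, w). (c, p @ w)) L"

definition lc_suf :: "('k, 'x word) lc \<Rightarrow> 'x word \<Rightarrow> ('k, 'x word) lc" where
  "lc_suf L s = map (\<lambda>(c, w). (c, w @ s)) L"

fun dia :: "'x word \<Rightarrow> 'x word \<Rightarrow> ('k::comm_ring_1, 'x word) lc"
and dia1 :: "'x atom \<Rightarrow> 'x word \<Rightarrow> ('k::comm_ring_1, 'x word) lc" where
  "dia [] v = [(1, v)]"
| "dia [a] v = dia1 a v"
| "dia (a # b # u) v = lc_pre [a] (dia (b # u) v)"
| "dia1 a [] = [(1, [a])]"
| "dia1 (Let x) v = [(1, Let x # v)]"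
| "dia1 (Brk a) (Let y # v) = [(1, Brk a # Let y # v)]"
| "dia1 (Brk a) (Brk b # v) =
     lc_suf (lc_brk (dia1 (Brk a) b) @ lc_brk (dia a [Brk b])
             @ lc_neg (lc_brk (lc_brk (dia a b)))) v"

text \<open>N(X) \<otimes> N(X) is the free module on pairs of words; product is \<diamond> \<otimes> \<diamond>.\<close>
definition tmul :: "('k::comm_ring_1, 'x word \<times> 'x word) lc \<Rightarrow> ('k, 'x word \<times> 'x word) lc
                    \<Rightarrow> ('k, 'x word \<times> 'x word) lc" where
  "tmul L M = concat (map (\<lambda>(c, (u, v)). concat (map (\<lambda>(d, (u', v')).
      concat (map (\<lambda>(e, u''). map (\<lambda>(f, v''). (c * d * e * f, (u'', v'')))
         (dia v v')) (dia u u'))) M)) L)"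

fun Delta :: "'x word \<Rightarrow> ('k::comm_ring_1, 'x word \<times> 'x word) lc"
and Delta_atom :: "'x atom \<Rightarrow> ('k::comm_ring_1, 'x word \<times> 'x word) lc" where
  "Delta [] = [(1, ([], []))]"
| "Delta (a # w) = tmul (Delta_atom a) (Delta w)"
| "Delta_atom (Let x) = [(1, ([], [Let x]))]"
| "Delta_atom (Brk u) = map (\<lambda>(c, (p, q)). (c, (p, [Brk q]))) (Delta u)"

text \<open>Elements of N(X) as finitely supported coefficient functions on Nijenhuis words;
 \<Delta> extended linearly; elements of the tensor square as coefficient functions on pairs.\<close>
definition DeltaN :: "('x word \<Rightarrow> 'k::comm_ring_1) \<Rightarrow> ('x word \<times> 'x word \<Rightarrow> 'k)" where
  "DeltaN a = (\<lambda>z. \<Sum>w\<in>{w. a w \<noteq> 0}. a w * lc_coeff (Delta w) z)"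

definition Ncomp :: "nat \<Rightarrow> ('x word \<Rightarrow> 'k::comm_ring_1) set" where
  "Ncomp n = {a. finite {w. a w \<noteq> 0} \<and> (\<forall>w. a w \<noteq> 0 \<longrightarrow> nwf w \<and> ndeg w = n)}"

definition tens_basis :: "nat \<Rightarrow> nat \<Rightarrow> ('x word \<times> 'x word) set" where
  "tens_basis p q = {(u, v). nwf u \<and> nwf v \<and> ndeg u = p \<and> ndeg v = q}"

definition Target :: "nat \<Rightarrow> ('x word \<times> 'x word \<Rightarrow> 'k::comm_ring_1) set" where
  "Target n = {T. finite {z. T z \<noteq> 0} \<and>
     (\<forall>z. T z \<noteq> 0 \<longrightarrow> z \<in> tens_basis 0 n \<union>
        (\<Union>{tens_basis p q | p q. p + q = n \<and> 0 < p \<and> 0 < q}))}"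

end

theory Submission
  imports Defs
begin

text \<open>Every term of \<open>\<Delta>(w)\<close> is a pair \<open>p \<otimes> q\<close> of Nijenhuis words with
  \<open>deg p + deg q = deg w\<close>, since \<open>\<diamond>\<close> is homogeneous and \<open>\<Delta>\<close> is built from \<open>\<diamond>\<close>
  and the bracket on the right factor.  Moreover \<open>q \<noteq> 1\<close> for \<open>w \<noteq> 1\<close>: the base
  case is \<open>\<Delta>(x) = 1 \<otimes> x\<close>, brackets only act on the right factor, and a product
  has positive degree as soon as one factor does.  Hence a term of positive left
  degree has positive right degree, which is the claimed decomposition.\<close>

lemma mem_dia1_Brk_BrkE:
  assumes "(c, w) \<in> set (dia1 (Brk a) (Brk b # v) :: ('k::comm_ring_1, 'x word) lc)"
  obtains d u where "w = Brk u # v" "(d, u) \<in> set (dia1 (Brk a) b :: ('k, 'x word) lc)"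
    | d u where "w = Brk u # v" "(d, u) \<in> set (dia a [Brk b] :: ('k, 'x word) lc)"
    | d u where "w = Brk [Brk u] # v" "(d, u) \<in> set (dia a b :: ('k, 'x word) lc)"
  using assms by (auto simp: lc_suf_def lc_brk_def lc_neg_def)

text \<open>The head condition carries the induction: a product starting with a bracket
  starts with a bracket, so prefixing a letter or a bracket keeps words alternating.\<close>
lemma dia_dia1_homogeneous:
  shows "nwf u \<Longrightarrow> nwf v \<Longrightarrow> (c, w) \<in> set (dia u v :: ('k::comm_ring_1, 'x word) lc) \<Longrightarrow>
      nwf w \<and> ndeg w = ndeg u + ndeg v \<and> (u \<noteq> [] \<longrightarrow> w \<noteq> [] \<and> is_brk (hd w) = is_brk (hd u))"
    and "nwf_atom a \<Longrightarrow> nwf v' \<Longrightarrow> (c', w') \<in> set (dia1 a v' :: ('k::comm_ring_1, 'x word) lc) \<Longrightarrow>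
      nwf w' \<and> ndeg w' = ndeg_atom a + ndeg v' \<and> w' \<noteq> [] \<and> is_brk (hd w') = is_brk a"
proof (induction u v and a v' arbitrary: c w and c' w' rule: dia_dia1.induct)
  case (3 a b u v)
  then obtain w' where w: "w = a # w'" and w': "(c, w') \<in> set (dia (b # u) v :: ('k, 'x word) lc)"
    by (auto simp: lc_pre_def)
  have "nwf w' \<and> ndeg w' = ndeg (b # u) + ndeg v \<and> w' \<noteq> [] \<and> is_brk (hd w') = is_brk b"
    using "3.IH" w' "3.prems" by auto
  then show ?case
    using w "3.prems"(1) by (cases w') auto
next
  case (5 x v)
  then show ?case by (cases v) auto
next
  case (7 a b v)
  have nwf_b: "nwf b" and nwf_v: "nwf v" and head_v: "v = [] \<or> \<not> is_brk (hd v)"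
    using "7.prems"(2) by (auto split: list.splits)
  have bracketed: "nwf (Brk u # v)" if "nwf u" for u
    using that nwf_v head_v by (auto split: list.splits)
  from "7.prems"(3) show ?case
  proof (cases rule: mem_dia1_Brk_BrkE)
    case (1 d u)
    then show ?thesis using "7.IH"(1)[of d u] "7.prems"(1) nwf_b bracketed by auto
  next
    case (2 d u)
    then show ?thesis using "7.IH"(2)[of d u] "7.prems"(1) nwf_b bracketed by auto
  next
    case (3 d u)
    then show ?thesis using "7.IH"(3)[of d u] "7.prems"(1) nwf_b bracketed by auto
  qed
qed auto

lemma tmul_memE:
  assumes "(c, (u, v)) \<in> set (tmul L M :: ('k::comm_ring_1, 'x word \<times> 'x word) lc)"
  obtains c1 p q d p' q' e f where "(c1, (p, q)) \<in> set L" "(d, (p', q')) \<in> set M"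
    "(e, u) \<in> set (dia p p' :: ('k, 'x word) lc)" "(f, v) \<in> set (dia q q' :: ('k, 'x word) lc)"
  using assms unfolding tmul_def by (auto simp: case_prod_beta)

lemma Delta_Delta_atom_homogeneous:
  shows "(c, (p, q)) \<in> set (Delta w :: ('k::comm_ring_1, 'x word \<times> 'x word) lc) \<Longrightarrow>
      nwf p \<and> nwf q \<and> ndeg p + ndeg q = ndeg w \<and> (w \<noteq> [] \<longrightarrow> 0 < ndeg q)"
    and "(c', (p', q')) \<in> set (Delta_atom a :: ('k::comm_ring_1, 'x word \<times> 'x word) lc) \<Longrightarrow>
      nwf p' \<and> nwf q' \<and> ndeg p' + ndeg q' = ndeg_atom a \<and> 0 < ndeg q'"
proof (induction w and a arbitrary: c p q and c' p' q' rule: Delta_Delta_atom.induct)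
  case (2 a w)
  from "2.prems" obtain c1 p1 q1 c2 p2 q2 e f
    where t1: "(c1, (p1, q1)) \<in> set (Delta_atom a :: ('k, 'x word \<times> 'x word) lc)"
      and t2: "(c2, (p2, q2)) \<in> set (Delta w :: ('k, 'x word \<times> 'x word) lc)"
      and p: "(e, p) \<in> set (dia p1 p2 :: ('k, 'x word) lc)"
      and q: "(f, q) \<in> set (dia q1 q2 :: ('k, 'x word) lc)"
    by (auto elim: tmul_memE)
  have h1: "nwf p1 \<and> nwf q1 \<and> ndeg p1 + ndeg q1 = ndeg_atom a \<and> 0 < ndeg q1"
    using "2.IH"(1) t1 by blast
  have h2: "nwf p2 \<and> nwf q2 \<and> ndeg p2 + ndeg q2 = ndeg w"
    using "2.IH"(2) t2 by blast
  have "nwf p \<and> ndeg p = ndeg p1 + ndeg p2" "nwf q \<and> ndeg q = ndeg q1 + ndeg q2"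
    using dia_dia1_homogeneous(1) p q h1 h2 by blast+
  then show ?case
    using h1 h2 by simp
qed fastforce+

lemma lc_coeff_nonzero_mem: "lc_coeff L z \<noteq> 0 \<Longrightarrow> \<exists>c. (c, z) \<in> set L"
  unfolding lc_coeff_def by (induction L) (auto split: if_splits)

lemma DeltaN_support:
  fixes a :: "'x word \<Rightarrow> 'k::comm_ring_1"
  shows "{z. DeltaN a z \<noteq> 0} \<subseteq> (\<Union>w\<in>{w. a w \<noteq> 0}. snd ` set (Delta w :: ('k, 'x word \<times> 'x word) lc))"
proof
  fix z assume "z \<in> {z. DeltaN a z \<noteq> 0}"
  then obtain w where w: "w \<in> {w. a w \<noteq> 0}"
      and "a w * lc_coeff (Delta w :: ('k, 'x word \<times> 'x word) lc) z \<noteq> 0"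
    unfolding DeltaN_def by (auto elim: sum.not_neutral_contains_not_neutral)
  then obtain c where "(c, z) \<in> set (Delta w :: ('k, 'x word \<times> 'x word) lc)"
    by (metis lc_coeff_nonzero_mem mult_zero_right)
  then show "z \<in> (\<Union>w\<in>{w. a w \<noteq> 0}. snd ` set (Delta w :: ('k, 'x word \<times> 'x word) lc))"
    using w by force
qed

lemma pair_in_target_basis:
  assumes "nwf p" "nwf q" "ndeg p + ndeg q = n" "ndeg p = 0 \<or> 0 < ndeg q"
  shows "(p, q) \<in> tens_basis 0 n \<union> \<Union>{tens_basis p q | p q. p + q = n \<and> 0 < p \<and> 0 < q}"
proof (cases "ndeg p = 0")
  case True
  then show ?thesis
    using assms by (simp add: tens_basis_def)
next
  case False
  have "(p, q) \<in> tens_basis (ndeg p) (ndeg q)"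
    using assms by (simp add: tens_basis_def)
  moreover have "tens_basis (ndeg p) (ndeg q) \<in> {tens_basis p q | p q. p + q = n \<and> 0 < p \<and> 0 < q}"
    using assms False by (intro CollectI exI[of _ "ndeg p"] exI[of _ "ndeg q"]) simp
  ultimately show ?thesis
    by (intro UnI2 UnionI)
qed

theorem mainTheorem10:
  fixes n :: nat
  shows "DeltaN ` (Ncomp n :: ('x word \<Rightarrow> 'k::comm_ring_1) set) \<subseteq> Target n"
proof
  fix T assume "T \<in> DeltaN ` (Ncomp n :: ('x word \<Rightarrow> 'k::comm_ring_1) set)"
  then obtain a :: "'x word \<Rightarrow> 'k" where a: "a \<in> Ncomp n" and T: "T = DeltaN a" by blast
  have fin: "finite {w. a w \<noteq> 0}" and deg: "\<And>w. a w \<noteq> 0 \<Longrightarrow> ndeg w = n"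
    using a unfolding Ncomp_def by blast+
  have "finite {z. T z \<noteq> 0}"
    unfolding T by (rule finite_subset[OF DeltaN_support]) (use fin in auto)
  moreover have "z \<in> tens_basis 0 n \<union> \<Union>{tens_basis p q | p q. p + q = n \<and> 0 < p \<and> 0 < q}"
    if "T z \<noteq> 0" for z
  proof -
    obtain w c p q where "a w \<noteq> 0" "(c, (p, q)) \<in> set (Delta w :: ('k, 'x word \<times> 'x word) lc)"
      and z: "z = (p, q)"
      using DeltaN_support \<open>T z \<noteq> 0\<close> unfolding T by fastforce
    then have "nwf p" "nwf q" "ndeg p + ndeg q = n" "ndeg p = 0 \<or> 0 < ndeg q"
      using Delta_Delta_atom_homogeneous(1) deg by fastforce+
    then show ?thesis
      unfolding z by (rule pair_in_target_basis)
  qed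
  ultimately show "T \<in> Target n"
    unfolding Target_def by blast
qed

end
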